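(* Let $\Bbbk\supseteq\mathbb Q$ be a commutative ring, $\mathfrak g$ a Lie algebra over $\Bbbk$, $H=\mathcal U(\mathfrak g)$, $C=S(\mathfrak g)$, and $\xi:S(\mathfrak g)\to\mathcal U(\mathfrak g)$ the symmetrization map $x_1\cdots x_n\mapsto\frac1{n!}\sum_{\sigma\in S_n}x_{\sigma(1)}\cdots x_{\sigma(n)}$. For $h\in\mathfrak g$ let $D_h:=\xi^{-1}\circ L_h\circ\xi:S(\mathfrak g)\to S(\mathfrak g)$, where $L_h(u)=hu$ is left multiplication in $\mathcal U(\mathfrak g)$. Then for all $h,x\in\mathfrak g$ and $n\ge0$, $$D_h(x^n)=\xi^{-1}(hx^n)=\sum_{k=0}^n\binom nk B_{n-k}\,x^k\cdot\bigl((\operatorname{ad}x)^{n-k}(h)\bigr),$$ where the product on the right is taken in $S(\mathfrak g)$ and $(\operatorname{ad}x)(y)=[x,y]$.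
   Context: $\xi$ is a coalgebra isomorphism $S(\mathfrak g)\to\mathcal U(\mathfrak g)$ which is the identity on $\mathfrak g$ (here one uses that $\mathfrak g$ is such that the PBW theorem holds, e.g. $\mathfrak g$ projective over $\Bbbk$). Bernoulli numbers are defined by $\frac{z}{e^z-1}=\sum_{m\ge0}\frac{B_m}{m!}z^m$. *)

theory Defs
  imports Main "HOL-Library.Function_Algebras" "HOL-Combinatorics.Permutations" "HOL-Computational_Algebra.Formal_Power_Series"
begin

text \<open>A commutative ring k contains Q iff every positive integer is invertible in k.\<close>
definition contains_rat :: "'k::comm_ring_1 itself \<Rightarrow> bool" where
  "contains_rat _ \<longleftrightarrow> (\<forall>n::nat. n > 0 \<longrightarrow> (\<exists>y::'k. of_nat n * y = 1))"

definition qinv :: "nat \<Rightarrow> 'k::comm_ring_1" where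
  "qinv n = (THE y. of_nat n * y = 1)"

definition ratk :: "rat \<Rightarrow> 'k::comm_ring_1" where
  "ratk q = of_int (fst (quotient_of q)) * qinv (nat (snd (quotient_of q)))"

definition bernoulli_gf :: "rat fps" where
  "bernoulli_gf = fps_X / (fps_exp 1 - 1)"

definition bernoulli_num :: "nat \<Rightarrow> rat" where
  "bernoulli_num m = fact m * fps_nth bernoulli_gf m"

definition lie_algebra :: "('k::comm_ring_1 \<Rightarrow> 'g::ab_group_add \<Rightarrow> 'g) \<Rightarrow> ('g \<Rightarrow> 'g \<Rightarrow> 'g) \<Rightarrow> bool" where
  "lie_algebra scale br \<longleftrightarrow> module scale
     \<and> (\<forall>x y z. br (x + y) z = br x z + br y z)
     \<and> (\<forall>x y z. br x (y + z) = br x y + br x z)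
     \<and> (\<forall>c x y. br (scale c x) y = scale c (br x y))
     \<and> (\<forall>c x y. br x (scale c y) = scale c (br x y))
     \<and> (\<forall>x. br x x = 0)
     \<and> (\<forall>x y z. br x (br y z) + br y (br z x) + br z (br x y) = 0)"

section \<open>Free associative algebra on the set g (finitely supported functions on words)\<close>

type_synonym ('g, 'k) fralg = "'g list \<Rightarrow> 'k"

definition fsupp :: "('g, 'k::zero) fralg \<Rightarrow> bool" where
  "fsupp p \<longleftrightarrow> finite {w. p w \<noteq> 0}"

definition wrd :: "'g list \<Rightarrow> ('g, 'k::{zero,one}) fralg" where
  "wrd w = (\<lambda>v. if v = w then 1 else 0)"

definition fsc :: "'k::times \<Rightarrow> ('g, 'k) fralg \<Rightarrow> ('g, 'k) fralg" where
  "fsc c p = (\<lambda>w. c * p w)"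

definition fmul :: "('g, 'k::comm_ring_1) fralg \<Rightarrow> ('g, 'k) fralg \<Rightarrow> ('g, 'k) fralg" where
  "fmul p q = (\<lambda>w. \<Sum>i\<le>length w. p (take i w) * q (drop i w))"

inductive_set idl :: "('g, 'k::comm_ring_1) fralg set \<Rightarrow> ('g, 'k) fralg set" for R where
  zero: "0 \<in> idl R"
| gen: "r \<in> R \<Longrightarrow> r \<in> idl R"
| add: "a \<in> idl R \<Longrightarrow> b \<in> idl R \<Longrightarrow> a + b \<in> idl R"
| smul: "a \<in> idl R \<Longrightarrow> fsc c a \<in> idl R"
| lmul: "a \<in> idl R \<Longrightarrow> fmul (wrd u) a \<in> idl R"
| rmul: "a \<in> idl R \<Longrightarrow> fmul a (wrd u) \<in> idl R"

text \<open>Relations making the free algebra on g into the tensor algebra T(g).\<close>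
definition rel_lin :: "('k::comm_ring_1 \<Rightarrow> 'g::ab_group_add \<Rightarrow> 'g) \<Rightarrow> ('g, 'k) fralg set" where
  "rel_lin scale = {wrd [x + y] - wrd [x] - wrd [y] | x y. True}
     \<union> {wrd [scale c x] - fsc c (wrd [x]) | c x. True}"

definition rel_U :: "('k::comm_ring_1 \<Rightarrow> 'g::ab_group_add \<Rightarrow> 'g) \<Rightarrow> ('g \<Rightarrow> 'g \<Rightarrow> 'g) \<Rightarrow> ('g, 'k) fralg set" where
  "rel_U scale br = rel_lin scale \<union> {wrd [x, y] - wrd [y, x] - wrd [br x y] | x y. True}"

definition rel_S :: "('k::comm_ring_1 \<Rightarrow> 'g::ab_group_add \<Rightarrow> 'g) \<Rightarrow> ('g, 'k) fralg set" where
  "rel_S scale = rel_lin scale \<union> {wrd [x, y] - wrd [y, x] | x y. True}"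

text \<open>Elements of the quotient algebras are equivalence classes of finitely supported representatives.\<close>
definition qclass :: "('g, 'k::comm_ring_1) fralg set \<Rightarrow> ('g, 'k) fralg \<Rightarrow> ('g, 'k) fralg set" where
  "qclass R p = {q. fsupp q \<and> q - p \<in> idl R}"

definition qcarrier :: "('g, 'k::comm_ring_1) fralg set \<Rightarrow> ('g, 'k) fralg set set" where
  "qcarrier R = qclass R ` {p. fsupp p}"

definition Ucl where "Ucl scale br = qclass (rel_U scale br)"
definition Scl where "Scl scale = qclass (rel_S scale)"
definition Ucarrier where "Ucarrier scale br = qcarrier (rel_U scale br)"
definition Scarrier where "Scarrier scale = qcarrier (rel_S scale)"

definition symw :: "'g list \<Rightarrow> ('g, 'k::comm_ring_1) fralg" where
  "symw w = fsc (qinv (fact (length w)))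
     (\<Sum>\<sigma>\<in>{\<sigma>. \<sigma> permutes {..<length w}}. wrd (map (\<lambda>i. w ! \<sigma> i) [0..<length w]))"

definition symz :: "('g, 'k::comm_ring_1) fralg \<Rightarrow> ('g, 'k) fralg" where
  "symz p = (\<Sum>w\<in>{w. p w \<noteq> 0}. fsc (p w) (symw w))"

definition xi :: "('k::comm_ring_1 \<Rightarrow> 'g::ab_group_add \<Rightarrow> 'g) \<Rightarrow> ('g \<Rightarrow> 'g \<Rightarrow> 'g)
    \<Rightarrow> ('g, 'k) fralg set \<Rightarrow> ('g, 'k) fralg set" where
  "xi scale br C = Ucl scale br (symz (SOME p. p \<in> C))"

definition Lmul :: "('k::comm_ring_1 \<Rightarrow> 'g::ab_group_add \<Rightarrow> 'g) \<Rightarrow> ('g \<Rightarrow> 'g \<Rightarrow> 'g) \<Rightarrow> 'g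
    \<Rightarrow> ('g, 'k) fralg set \<Rightarrow> ('g, 'k) fralg set" where
  "Lmul scale br h C = Ucl scale br (fmul (wrd [h]) (SOME p. p \<in> C))"

definition xi_inv where
  "xi_inv scale br = the_inv_into (Scarrier scale) (xi scale br)"

definition Dop where
  "Dop scale br h = xi_inv scale br \<circ> Lmul scale br h \<circ> xi scale br"

end

theory Submission
  imports Defs
begin

(* Since every permutation of x^n is x^n itself, xi(x^n) = x^n and D_h(x^n) = xi^-1(h x^n)
   directly; the work is to show that xi maps the right-hand side to h x^n in U(g).
   Symmetrizing x^k y gives 1/(k+1) sum_i x^i y x^(k-i).  Moving y = (ad x)^j h to the front
   with x z = z x + [x,z] turns x^i y into sum_l C(i,l) (ad x)^l(y) x^(i-l), and the hockey
   stick identity sums this over i to 1/(k+1) sum_l C(k+1,l+1) (ad x)^(j+l)(h) x^(k-l).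
   The coefficient of (ad x)^m(h) x^(n-m) in xi of the right-hand side is then
   C(n,m) sum_a C(m,a) B_a / (m-a+1), which is [m = 0] because the generating function
   of the B_a is inverse to (e^z - 1)/z.  Injectivity of xi (PBW) identifies the preimage.
   Only the defining relations of U(g) enter. *)

section \<open>Bernoulli numbers\<close>

definition exp_minus_one_over_X :: "rat fps" where
  "exp_minus_one_over_X = Abs_fps (\<lambda>j. 1 / fact (Suc j))"

lemma fps_exp_minus_one: "fps_exp (1::rat) - 1 = fps_X * exp_minus_one_over_X"
  by (rule fps_ext) (auto simp: exp_minus_one_over_X_def fps_exp_def fact_reduce)

lemma bernoulli_gf_times_exp_minus_one_over_X: "bernoulli_gf * exp_minus_one_over_X = 1"
proof -
  have nz: "fps_exp (1::rat) - 1 \<noteq> 0"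
  proof
    assume "fps_exp (1::rat) - 1 = 0"
    then have "fps_nth (fps_exp (1::rat) - 1) 1 = 0" by simp
    then show False by (simp add: fps_exp_def)
  qed
  have "subdegree (fps_exp (1::rat) - 1) = 1"
    by (rule subdegreeI) (auto simp: fps_exp_def)
  then have "bernoulli_gf * (fps_exp 1 - 1) = fps_X"
    unfolding bernoulli_gf_def using nz by (intro fps_times_divide_eq) auto
  then have "fps_X * (bernoulli_gf * exp_minus_one_over_X) = fps_X * 1"
    by (simp add: fps_exp_minus_one algebra_simps)
  then show ?thesis by simp
qed

lemma bernoulli_num_recurrence:
  "(\<Sum>a\<le>m. of_nat (m choose a) * bernoulli_num a / of_nat (Suc (m - a))) = (if m = 0 then 1 else 0)"
proof -
  have "(\<Sum>a\<le>m. of_nat (m choose a) * bernoulli_num a / of_nat (Suc (m - a)))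
      = fact m * (\<Sum>a=0..m. fps_nth bernoulli_gf a * (1 / fact (Suc (m - a))))"
    unfolding sum_distrib_left atMost_atLeast0[symmetric]
  proof (rule sum.cong[OF refl])
    fix a assume "a \<in> {..m}"
    then have "(of_nat (m choose a) :: rat) = fact m / (fact a * fact (m - a))"
      by (simp add: binomial_fact)
    moreover have "(fact (Suc (m - a)) :: rat) = of_nat (Suc (m - a)) * fact (m - a)"
      by (rule fact_Suc)
    ultimately show "of_nat (m choose a) * bernoulli_num a / of_nat (Suc (m - a))
        = fact m * (fps_nth bernoulli_gf a * (1 / fact (Suc (m - a))))"
      by (simp only: bernoulli_num_def) (simp add: field_simps)
  qed
  also have "\<dots> = fact m * fps_nth (bernoulli_gf * exp_minus_one_over_X) m"
    by (simp add: fps_mult_nth exp_minus_one_over_X_def)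
  also have "\<dots> = (if m = 0 then 1 else 0)"
    by (simp add: bernoulli_gf_times_exp_minus_one_over_X)
  finally show ?thesis .
qed

lemma bernoulli_num_binomial_sum:
  assumes "m \<le> n"
  shows "(\<Sum>a\<le>m. of_nat (n choose a) * bernoulli_num a * (1 / of_nat (Suc (n - a)))
            * of_nat (Suc (n - a) choose Suc (m - a))) = (if m = 0 then 1 else (0::rat))"
proof -
  have "(\<Sum>a\<le>m. of_nat (n choose a) * bernoulli_num a * (1 / of_nat (Suc (n - a)))
            * of_nat (Suc (n - a) choose Suc (m - a)))
      = (\<Sum>a\<le>m. of_nat (n choose m) * (of_nat (m choose a) * bernoulli_num a / of_nat (Suc (m - a))))"
  proof (rule sum.cong[OF refl])
    fix a assume "a \<in> {..m}"
    then have am: "a \<le> m" by simp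
    have "(n choose m) * (m choose a) = (n choose a) * ((n - a) choose (m - a))"
      using am assms by (rule choose_mult)
    moreover have "Suc (n - a) * ((n - a) choose (m - a)) = (Suc (n - a) choose Suc (m - a)) * Suc (m - a)"
      by (rule Suc_times_binomial_eq)
    ultimately have "(n choose a) * (Suc (n - a) choose Suc (m - a)) * Suc (m - a)
        = (n choose m) * (m choose a) * Suc (n - a)"
      by (simp add: algebra_simps)
    then have "(of_nat (n choose a) :: rat) * of_nat (Suc (n - a) choose Suc (m - a)) * of_nat (Suc (m - a))
        = of_nat (n choose m) * of_nat (m choose a) * of_nat (Suc (n - a))"
      by (simp only: of_nat_mult[symmetric] of_nat_eq_iff)
    then show "of_nat (n choose a) * bernoulli_num a * (1 / of_nat (Suc (n - a))) * of_nat (Suc (n - a) choose Suc (m - a))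
        = of_nat (n choose m) * (of_nat (m choose a) * bernoulli_num a / of_nat (Suc (m - a)))"
      by (simp add: field_simps del: of_nat_Suc binomial_Suc_Suc)
  qed
  also have "\<dots> = of_nat (n choose m) * (\<Sum>a\<le>m. of_nat (m choose a) * bernoulli_num a / of_nat (Suc (m - a)))"
    by (simp add: sum_distrib_left)
  also have "\<dots> = (if m = 0 then 1 else 0)"
    by (simp only: bernoulli_num_recurrence) simp
  finally show ?thesis .
qed

section \<open>The rationals inside the ground ring\<close>

lemma of_nat_mult_qinv:
  assumes "contains_rat TYPE('k::comm_ring_1)" "n > 0"
  shows "of_nat n * (qinv n :: 'k) = 1"
proof -
  obtain y :: 'k where y: "of_nat n * y = 1"
    using assms unfolding contains_rat_def by blast
  have "of_nat n * (THE y::'k. of_nat n * y = 1) = 1"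
  proof (rule theI[of _ y])
    fix z :: 'k assume "of_nat n * z = 1"
    then have "z = z * (of_nat n * y)" "of_nat n * z * y = y" using y by simp_all
    then show "z = y" by (simp add: algebra_simps)
  qed (rule y)
  then show ?thesis unfolding qinv_def .
qed

lemma of_int_mult_cancel_pos:
  assumes "contains_rat TYPE('k::comm_ring_1)" "b > 0" "of_int b * (z::'k) = of_int b * z'"
  shows "z = z'"
proof -
  have "qinv (nat b) * (of_nat (nat b) * z) = qinv (nat b) * (of_nat (nat b) * z')"
    using assms(2,3) by simp
  then show ?thesis
    using of_nat_mult_qinv[OF assms(1), of "nat b"] assms(2) by (simp add: algebra_simps)
qed

lemma rat_fraction_cases:
  fixes q :: rat
  obtains a b where "b > 0" "q = of_int a / of_int b"
  by (metis quotient_of_denom_pos quotient_of_div surj_pair)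

lemma of_int_mult_ratk:
  assumes "contains_rat TYPE('k::comm_ring_1)" "b > 0" "q = of_int a / of_int b"
  shows "of_int b * (ratk q :: 'k) = of_int a"
proof -
  obtain p d where pd: "quotient_of q = (p, d)" by (cases "quotient_of q")
  have d: "d > 0" using quotient_of_denom_pos[OF pd] .
  have "of_int a / of_int b = (of_int p / of_int d :: rat)"
    using assms(3) quotient_of_div[OF pd] by simp
  then have "(of_int (a * d) :: rat) = of_int (p * b)"
    using d assms(2) by (simp add: field_simps)
  then have ad: "a * d = p * b" by (simp only: of_int_eq_iff)
  have dd: "of_int d * (qinv (nat d) :: 'k) = 1"
    using of_nat_mult_qinv[OF assms(1), of "nat d"] d by simp
  have "of_int d * (of_int b * (ratk q :: 'k)) = of_int b * of_int p * (of_int d * qinv (nat d))"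
    unfolding ratk_def pd by (simp add: algebra_simps)
  also have "\<dots> = of_int (p * b)"
    using dd by simp
  also have "\<dots> = of_int d * of_int a"
    by (metis ad of_int_mult mult.commute)
  finally show ?thesis using of_int_mult_cancel_pos[OF assms(1) d] by blast
qed

lemma ratk_eqI:
  assumes "contains_rat TYPE('k::comm_ring_1)" "b > 0" "q = of_int a / of_int b"
    "of_int b * (z::'k) = of_int a"
  shows "ratk q = z"
proof (rule of_int_mult_cancel_pos[OF assms(1,2)])
  show "of_int b * ratk q = of_int b * z"
    using of_int_mult_ratk[OF assms(1-3)] assms(4) by simp
qed

lemma ratk_add:
  assumes "contains_rat TYPE('k::comm_ring_1)"
  shows "(ratk (q1 + q2) :: 'k) = ratk q1 + ratk q2"
proof -
  obtain a1 b1 where 1: "b1 > 0" "q1 = of_int a1 / of_int b1" by (rule rat_fraction_cases)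
  obtain a2 b2 where 2: "b2 > 0" "q2 = of_int a2 / of_int b2" by (rule rat_fraction_cases)
  show ?thesis
  proof (rule ratk_eqI[OF assms, of "b1 * b2" _ "a1 * b2 + a2 * b1"])
    show "0 < b1 * b2" "q1 + q2 = of_int (a1 * b2 + a2 * b1) / of_int (b1 * b2)"
      using 1 2 by (simp_all add: field_simps)
    have "of_int (b1 * b2) * (ratk q1 + ratk q2 :: 'k)
        = of_int b2 * (of_int b1 * ratk q1) + of_int b1 * (of_int b2 * ratk q2)"
      by (simp add: algebra_simps)
    then show "of_int (b1 * b2) * (ratk q1 + ratk q2 :: 'k) = of_int (a1 * b2 + a2 * b1)"
      by (simp only: of_int_mult_ratk[OF assms 1] of_int_mult_ratk[OF assms 2]) (simp add: algebra_simps)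
  qed
qed

lemma ratk_mult:
  assumes "contains_rat TYPE('k::comm_ring_1)"
  shows "(ratk (q1 * q2) :: 'k) = ratk q1 * ratk q2"
proof -
  obtain a1 b1 where 1: "b1 > 0" "q1 = of_int a1 / of_int b1" by (rule rat_fraction_cases)
  obtain a2 b2 where 2: "b2 > 0" "q2 = of_int a2 / of_int b2" by (rule rat_fraction_cases)
  show ?thesis
  proof (rule ratk_eqI[OF assms, of "b1 * b2" _ "a1 * a2"])
    show "0 < b1 * b2" "q1 * q2 = of_int (a1 * a2) / of_int (b1 * b2)"
      using 1 2 by simp_all
    have "of_int (b1 * b2) * (ratk q1 * ratk q2 :: 'k) = (of_int b1 * ratk q1) * (of_int b2 * ratk q2)"
      by (simp add: algebra_simps)
    then show "of_int (b1 * b2) * (ratk q1 * ratk q2 :: 'k) = of_int (a1 * a2)"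
      by (simp add: of_int_mult_ratk[OF assms 1] of_int_mult_ratk[OF assms 2])
  qed
qed

lemma ratk_of_nat:
  assumes "contains_rat TYPE('k::comm_ring_1)"
  shows "(ratk (of_nat a) :: 'k) = of_nat a"
  by (rule ratk_eqI[OF assms, of 1 _ "int a"]) auto

lemma ratk_inverse_of_nat:
  assumes "contains_rat TYPE('k::comm_ring_1)" "n > 0"
  shows "(ratk (1 / of_nat n) :: 'k) = qinv n"
  by (rule ratk_eqI[OF assms(1), of "int n" _ 1]) (use assms of_nat_mult_qinv[OF assms] in auto)

lemma ratk_sum:
  assumes "contains_rat TYPE('k::comm_ring_1)"
  shows "(ratk (\<Sum>i\<in>A. f i) :: 'k) = (\<Sum>i\<in>A. ratk (f i))"
  by (induction A rule: infinite_finite_induct)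
    (simp_all add: ratk_add[OF assms] ratk_of_nat[OF assms, of 0, simplified])

lemma qinv_fact_Suc_mult_fact:
  assumes "contains_rat TYPE('k::comm_ring_1)"
  shows "(qinv (fact (Suc k)) :: 'k) * of_nat (fact k) = qinv (Suc k)"
proof -
  have "(of_nat (fact (Suc k)) :: rat) = of_nat (Suc k) * of_nat (fact k)"
    by (simp only: fact_Suc of_nat_mult of_nat_id)
  then have "(1 / of_nat (fact (Suc k)) * of_nat (fact k) :: rat) = 1 / of_nat (Suc k)"
    by simp
  moreover have "(qinv (fact (Suc k)) :: 'k) * of_nat (fact k)
      = ratk (1 / of_nat (fact (Suc k)) * of_nat (fact k))"
    by (simp only: ratk_mult[OF assms] ratk_inverse_of_nat[OF assms] ratk_of_nat[OF assms] fact_gt_zero)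
  ultimately show ?thesis
    by (simp only: ratk_inverse_of_nat[OF assms zero_less_Suc])
qed

section \<open>The free algebra on g\<close>

lemma sum_apply: "(sum f A) w = (\<Sum>i\<in>A. f i w)"
  by (induction A rule: infinite_finite_induct) auto

lemma fsc_diff_right: "fsc (c::'k::comm_ring_1) (a - b) = fsc c a - fsc c b"
  by (simp add: fsc_def fun_eq_iff algebra_simps)
lemma fsc_add_left: "fsc (c + d) (a::('g,'k::comm_ring_1) fralg) = fsc c a + fsc d a"
  by (simp add: fsc_def fun_eq_iff algebra_simps)
lemma fsc_fsc: "fsc (c::'k::comm_ring_1) (fsc d a) = fsc (c * d) a"
  by (simp add: fsc_def fun_eq_iff algebra_simps)
lemma fsc_one [simp]: "fsc (1::'k::comm_ring_1) a = a"
  by (simp add: fsc_def)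
lemma fsc_zero_left [simp]: "fsc (0::'k::comm_ring_1) a = 0"
  by (simp add: fsc_def fun_eq_iff)
lemma fsc_sum_right: "fsc (c::'k::comm_ring_1) (sum f A) = (\<Sum>i\<in>A. fsc c (f i))"
  by (simp add: fsc_def fun_eq_iff sum_apply sum_distrib_left)
lemma fsc_minus_one: "fsc (-1::'k::comm_ring_1) a = - a"
  by (simp add: fsc_def fun_eq_iff)

lemma sum_const_fralg: "(\<Sum>i\<in>A. (a::('g,'k::comm_ring_1) fralg)) = fsc (of_nat (card A)) a"
  by (simp add: fun_eq_iff sum_apply fsc_def)

lemma fmul_add_right: "fmul p (a + b) = fmul p a + fmul p b"
  by (simp add: fmul_def fun_eq_iff algebra_simps sum.distrib)
lemma fmul_add_left: "fmul (a + b) p = fmul a p + fmul b p"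
  by (simp add: fmul_def fun_eq_iff algebra_simps sum.distrib)
lemma fmul_diff_right: "fmul p (a - b) = fmul p a - fmul p b"
  by (simp add: fmul_def fun_eq_iff algebra_simps sum_subtractf)
lemma fmul_diff_left: "fmul (a - b) p = fmul a p - fmul b p"
  by (simp add: fmul_def fun_eq_iff algebra_simps sum_subtractf)
lemma fmul_fsc_right: "fmul p (fsc c a) = fsc c (fmul p a)"
  by (simp add: fmul_def fsc_def fun_eq_iff algebra_simps sum_distrib_left)
lemma fmul_fsc_left: "fmul (fsc c a) p = fsc c (fmul a p)"
  by (simp add: fmul_def fsc_def fun_eq_iff algebra_simps sum_distrib_left)
lemma fmul_zero_right [simp]: "fmul p 0 = 0"
  by (simp add: fmul_def fun_eq_iff)
lemma fmul_zero_left [simp]: "fmul 0 p = 0"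
  by (simp add: fmul_def fun_eq_iff)
lemma fmul_sum_right: "fmul p (sum f A) = (\<Sum>i\<in>A. fmul p (f i))"
  using sum_comp_morphism[of "fmul p" f A] by (simp add: fmul_add_right o_def)
lemma fmul_sum_left: "fmul (sum f A) p = (\<Sum>i\<in>A. fmul (f i) p)"
  using sum_comp_morphism[of "\<lambda>a. fmul a p" f A] by (simp add: fmul_add_left o_def)

lemma fmul_wrd_wrd: "fmul (wrd u) (wrd v) = (wrd (u @ v) :: ('g,'k::comm_ring_1) fralg)"
proof
  fix w :: "'g list"
  have split: "take i w = u \<and> drop i w = v \<longleftrightarrow> i = length u \<and> w = u @ v" if "i \<le> length w" for i
    using that by (auto simp: min_def)
  have "fmul (wrd u) (wrd v) w = (\<Sum>i\<le>length w. (if i = length u \<and> w = u @ v then 1 else 0 :: 'k))"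
    unfolding fmul_def wrd_def by (rule sum.cong) (use split in auto)
  also have "\<dots> = wrd (u @ v) w"
    by (cases "w = u @ v") (auto simp: wrd_def)
  finally show "fmul (wrd u) (wrd v) w = (wrd (u @ v) w :: 'k)" .
qed

lemma fmul_Nil_left [simp]: "fmul (wrd []) a = (a :: ('g,'k::comm_ring_1) fralg)"
proof
  fix w :: "'g list"
  have "fmul (wrd []) a w = (\<Sum>i\<le>length w. if i = 0 then a w else 0)"
    unfolding fmul_def wrd_def by (rule sum.cong) auto
  then show "fmul (wrd []) a w = a w" by simp
qed

lemma fmul_Nil_right [simp]: "fmul a (wrd []) = (a :: ('g,'k::comm_ring_1) fralg)"
proof
  fix w :: "'g list"
  have "fmul a (wrd []) w = (\<Sum>i\<le>length w. if i = length w then a w else 0)"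
    unfolding fmul_def wrd_def by (rule sum.cong) auto
  then show "fmul a (wrd []) w = a w" by simp
qed

lemma fsupp_zero [simp]: "fsupp (0::('g,'k::comm_ring_1) fralg)"
  by (simp add: fsupp_def)
lemma fsupp_wrd [simp]: "fsupp (wrd w :: ('g,'k::comm_ring_1) fralg)"
  unfolding fsupp_def by (rule finite_subset[of _ "{w}"]) (auto simp: wrd_def)
lemma fsupp_add [simp]: "fsupp a \<Longrightarrow> fsupp b \<Longrightarrow> fsupp (a + (b::('g,'k::comm_ring_1) fralg))"
  unfolding fsupp_def by (rule finite_subset[of _ "{w. a w \<noteq> 0} \<union> {w. b w \<noteq> 0}"]) auto
lemma fsupp_fsc [simp]: "fsupp a \<Longrightarrow> fsupp (fsc c (a::('g,'k::comm_ring_1) fralg))"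
  unfolding fsupp_def fsc_def by (rule finite_subset[of _ "{w. a w \<noteq> 0}"]) auto
lemma fsupp_diff [simp]: "fsupp a \<Longrightarrow> fsupp b \<Longrightarrow> fsupp (a - (b::('g,'k::comm_ring_1) fralg))"
  unfolding fsupp_def by (rule finite_subset[of _ "{w. a w \<noteq> 0} \<union> {w. b w \<noteq> 0}"]) auto
lemma fsupp_sum:
  assumes "\<And>i. i \<in> A \<Longrightarrow> fsupp (f i :: ('g,'k::comm_ring_1) fralg)"
  shows "fsupp (sum f A)"
proof (cases "finite A")
  case True
  have "{w. sum f A w \<noteq> 0} \<subseteq> (\<Union>i\<in>A. {w. f i w \<noteq> 0})"
  proof
    fix w assume "w \<in> {w. sum f A w \<noteq> 0}"
    then have "(\<Sum>i\<in>A. f i w) \<noteq> 0" by (simp add: sum_apply)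
    then obtain i where "i \<in> A" "f i w \<noteq> 0" by (meson sum.neutral)
    then show "w \<in> (\<Union>i\<in>A. {w. f i w \<noteq> 0})" by blast
  qed
  then show ?thesis
    using True assms unfolding fsupp_def by (meson finite_UN_I finite_subset)
qed simp

lemma fralg_expand:
  assumes "fsupp (a::('g,'k::comm_ring_1) fralg)"
  shows "a = (\<Sum>w\<in>{w. a w \<noteq> 0}. fsc (a w) (wrd w))"
proof
  fix v
  have "(\<Sum>w\<in>{w. a w \<noteq> 0}. fsc (a w) (wrd w)) v = (\<Sum>w\<in>{w. a w \<noteq> 0}. if w = v then a v else 0)"
    unfolding sum_apply by (rule sum.cong) (auto simp: fsc_def wrd_def)
  also have "\<dots> = a v"
    using assms by (cases "a v = 0") (auto simp: sum.delta' fsupp_def)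
  finally show "a v = (\<Sum>w\<in>{w. a w \<noteq> 0}. fsc (a w) (wrd w)) v" by simp
qed

lemma fsupp_fmul:
  assumes "fsupp (p::('g,'k::comm_ring_1) fralg)" "fsupp q"
  shows "fsupp (fmul p q)"
proof -
  have "fmul p q = (\<Sum>w\<in>{w. q w \<noteq> 0}. fsc (q w) (\<Sum>v\<in>{v. p v \<noteq> 0}. fsc (p v) (wrd (v @ w))))"
    by (subst fralg_expand[OF assms(1)], subst fralg_expand[OF assms(2)])
      (simp only: fmul_sum_left fmul_sum_right fmul_fsc_left fmul_fsc_right fmul_wrd_wrd)
  then show ?thesis by (simp add: fsupp_sum)
qed

lemma idl_uminus: "a \<in> idl R \<Longrightarrow> - a \<in> idl R"
  by (metis fsc_minus_one idl.smul)

lemma idl_diff: "a \<in> idl R \<Longrightarrow> b \<in> idl R \<Longrightarrow> a - b \<in> idl R"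
  by (metis diff_conv_add_uminus idl.add idl_uminus)

lemma idl_sum: "(\<And>i. i \<in> A \<Longrightarrow> f i \<in> idl R) \<Longrightarrow> sum f A \<in> idl R"
proof (induction A rule: infinite_finite_induct)
  case (insert x F)
  have "f x \<in> idl R" "sum f F \<in> idl R" using insert by auto
  then have "f x + sum f F \<in> idl R" by (rule idl.add)
  then show ?case by (simp only: sum.insert[OF insert(1,2)])
qed (simp_all add: idl.zero)

lemma fsupp_idl:
  assumes "\<And>r. r \<in> R \<Longrightarrow> fsupp r" "a \<in> idl R"
  shows "fsupp a"
  using assms(2)
proof induct
  case zero
  show ?case using fsupp_zero by (simp add: zero_fun_def)
next
  case (add a b)
  then show ?case using fsupp_add[of a b] by (simp add: plus_fun_def)
qed (auto simp: assms(1) fsupp_fmul)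

lemma qclass_eqI:
  assumes "p - q \<in> idl R"
  shows "qclass R p = qclass R q"
proof -
  have "r - p \<in> idl R \<longleftrightarrow> r - q \<in> idl R" for r
  proof
    assume "r - p \<in> idl R"
    then have "(r - p) + (p - q) \<in> idl R" using assms by (rule idl.add)
    moreover have "(r - p) + (p - q) = r - q" by (simp add: fun_eq_iff)
    ultimately show "r - q \<in> idl R" by simp
  next
    assume "r - q \<in> idl R"
    then have "(r - q) - (p - q) \<in> idl R" using assms by (rule idl_diff)
    moreover have "(r - q) - (p - q) = r - p" by (simp add: fun_eq_iff)
    ultimately show "r - p \<in> idl R" by simp
  qed
  then show ?thesis unfolding qclass_def by blast
qed

lemma qclass_self: "fsupp p \<Longrightarrow> p \<in> qclass R p"
  unfolding qclass_def by (auto intro: idl.zero)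

definition sandwich :: "'g list \<Rightarrow> ('g, 'k::comm_ring_1) fralg \<Rightarrow> 'g list \<Rightarrow> ('g, 'k) fralg" where
  "sandwich u a v = fmul (wrd u) (fmul a (wrd v))"

lemma sandwich_idl: "a \<in> idl R \<Longrightarrow> sandwich u a v \<in> idl R"
  unfolding sandwich_def by (intro idl.lmul idl.rmul)

lemma sandwich_wrd: "sandwich u (wrd m) v = (wrd (u @ m @ v) :: ('g,'k::comm_ring_1) fralg)"
  unfolding sandwich_def by (simp add: fmul_wrd_wrd)
lemma sandwich_add: "sandwich u (a + b) v = sandwich u a v + sandwich u b v"
  unfolding sandwich_def by (simp only: fmul_add_left fmul_add_right)
lemma sandwich_diff: "sandwich u (a - b) v = sandwich u a v - sandwich u b v"
  unfolding sandwich_def by (simp only: fmul_diff_left fmul_diff_right)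
lemma sandwich_fsc: "sandwich u (fsc c a) v = fsc c (sandwich u a v)"
  unfolding sandwich_def by (simp only: fmul_fsc_left fmul_fsc_right)
lemma sandwich_sum: "sandwich u (sum f A) v = (\<Sum>i\<in>A. sandwich u (f i) v)"
  unfolding sandwich_def by (simp only: fmul_sum_left fmul_sum_right)
lemma sandwich_Nil: "sandwich [] a [] = (a::('g,'k::comm_ring_1) fralg)"
  unfolding sandwich_def by simp
lemma fsupp_sandwich: "fsupp a \<Longrightarrow> fsupp (sandwich u (a::('g,'k::comm_ring_1) fralg) v)"
  unfolding sandwich_def by (intro fsupp_fmul fsupp_wrd)

lemma sandwich_expand:
  assumes "fsupp (a::('g,'k::comm_ring_1) fralg)"
  shows "sandwich u a v = (\<Sum>w\<in>{w. a w \<noteq> 0}. fsc (a w) (wrd (u @ w @ v)))"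
  by (subst fralg_expand[OF assms]) (simp only: sandwich_sum sandwich_fsc sandwich_wrd)

lemma sandwich_fmul_left:
  assumes "fsupp (a::('g,'k::comm_ring_1) fralg)"
  shows "sandwich u (fmul (wrd u') a) v = sandwich (u @ u') a v"
proof -
  have "fmul (wrd u') a = sandwich u' a []" unfolding sandwich_def by simp
  then show ?thesis
    by (simp add: sandwich_expand[OF assms] sandwich_sum sandwich_fsc sandwich_wrd)
qed

lemma sandwich_fmul_right:
  assumes "fsupp (a::('g,'k::comm_ring_1) fralg)"
  shows "sandwich u (fmul a (wrd v')) v = sandwich u a (v' @ v)"
proof -
  have "fmul a (wrd v') = sandwich [] a v'" unfolding sandwich_def by simp
  then show ?thesis
    by (simp add: sandwich_expand[OF assms] sandwich_sum sandwich_fsc sandwich_wrd)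
qed

section \<open>The symmetrization map on representatives\<close>

lemma symw_eq_sum_permute_list:
  "symw w = fsc (qinv (fact (length w)))
     (\<Sum>\<sigma>\<in>{\<sigma>. \<sigma> permutes {..<length w}}. wrd (permute_list \<sigma> w))"
  unfolding symw_def permute_list_def ..

lemma symz_eq_sum_superset:
  assumes "finite W" "{w. p w \<noteq> 0} \<subseteq> W"
  shows "symz p = (\<Sum>w\<in>W. fsc (p w) (symw w :: ('g,'k::comm_ring_1) fralg))"
  unfolding symz_def using assms by (intro sum.mono_neutral_left) auto

lemma symz_add:
  assumes "fsupp (a::('g,'k::comm_ring_1) fralg)" "fsupp b"
  shows "symz (a + b) = symz a + symz b"
proof -
  let ?W = "{w. a w \<noteq> 0} \<union> {w. b w \<noteq> 0}"
  have W: "finite ?W" using assms by (simp add: fsupp_def)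
  have "symz (a + b) = (\<Sum>w\<in>?W. fsc ((a + b) w) (symw w))"
    by (rule symz_eq_sum_superset[OF W]) auto
  also have "\<dots> = (\<Sum>w\<in>?W. fsc (a w) (symw w)) + (\<Sum>w\<in>?W. fsc (b w) (symw w))"
    by (simp add: fsc_add_left sum.distrib)
  also have "\<dots> = symz a + symz b"
    by (simp add: symz_eq_sum_superset[OF W])
  finally show ?thesis .
qed

lemma symz_fsc:
  assumes "fsupp (a::('g,'k::comm_ring_1) fralg)"
  shows "symz (fsc c a) = fsc c (symz a)"
proof -
  let ?W = "{w. a w \<noteq> 0}"
  have W: "finite ?W" using assms by (simp add: fsupp_def)
  have "symz (fsc c a) = (\<Sum>w\<in>?W. fsc (fsc c a w) (symw w))"
    by (rule symz_eq_sum_superset[OF W]) (auto simp: fsc_def)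
  also have "\<dots> = fsc c (symz a)"
    by (simp add: symz_eq_sum_superset[OF W] fsc_sum_right fsc_fsc) (simp add: fsc_def)
  finally show ?thesis .
qed

lemma symz_diff:
  assumes "fsupp (a::('g,'k::comm_ring_1) fralg)" "fsupp b"
  shows "symz (a - b) = symz a - symz b"
  using symz_add[of "a - b" b] assms by simp

lemma symz_zero [simp]: "symz (0 :: ('g,'k::comm_ring_1) fralg) = 0"
  by (simp add: symz_def)

lemma symz_wrd [simp]: "symz (wrd w :: ('g,'k::comm_ring_1) fralg) = symw w"
  by (subst symz_eq_sum_superset[of "{w}"]) (auto simp: wrd_def)

lemma symz_sum:
  assumes "\<And>i. i \<in> A \<Longrightarrow> fsupp (f i :: ('g,'k::comm_ring_1) fralg)"
  shows "symz (sum f A) = (\<Sum>i\<in>A. symz (f i))"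
  using assms
proof (induction A rule: infinite_finite_induct)
  case (insert x F)
  then have "symz (f x + sum f F) = symz (f x) + (\<Sum>i\<in>F. symz (f i))"
    by (simp add: symz_add fsupp_sum)
  then show ?case by (simp only: sum.insert[OF insert(1,2)])
qed simp_all

lemma permute_list_list_update:
  assumes "\<sigma> permutes {..<length w}" "p < length w"
  shows "permute_list \<sigma> (w[p := a]) = (permute_list \<sigma> w)[inv \<sigma> p := a]"
proof (rule nth_equalityI)
  have "inv \<sigma> p < length w"
    using permutes_in_image[OF permutes_inv[OF assms(1)]] assms(2) by simp
  moreover fix i assume "i < length (permute_list \<sigma> (w[p := a]))"
  ultimately show "permute_list \<sigma> (w[p := a]) ! i = (permute_list \<sigma> w)[inv \<sigma> p := a] ! i"
    using assms permutes_inverses[OF assms(1)] by (auto simp: permute_list_nth nth_list_update)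
qed simp

lemma permute_list_replicate:
  assumes "\<sigma> permutes {..<n}"
  shows "permute_list \<sigma> (replicate n x) = replicate n x"
proof (rule nth_equalityI)
  fix i assume "i < length (permute_list \<sigma> (replicate n x))"
  then show "permute_list \<sigma> (replicate n x) ! i = replicate n x ! i"
    using assms permutes_in_image[OF assms, of i] by (simp add: permute_list_nth)
qed simp

lemma symw_permute_list:
  assumes "\<tau> permutes {..<length w}"
  shows "symw (permute_list \<tau> w) = symw w"
proof -
  let ?P = "{\<sigma>. \<sigma> permutes {..<length w}}"
  have "(\<Sum>\<sigma>\<in>?P. wrd (permute_list \<sigma> (permute_list \<tau> w)))
      = (\<Sum>\<sigma>\<in>?P. wrd (permute_list (\<tau> \<circ> \<sigma>) w))"
    by (rule sum.cong) (simp_all add: permute_list_compose)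
  also have "\<dots> = (\<Sum>\<sigma>\<in>?P. (wrd (permute_list \<sigma> w) :: ('a,'b) fralg))"
    by (rule setum_permutations_compose_left[OF assms, symmetric])
  finally show ?thesis by (simp add: symw_eq_sum_permute_list)
qed

lemma symw_swap: "symw (u @ b # a # v) = symw (u @ a # b # v)"
proof -
  let ?w = "u @ a # b # v"
  let ?\<tau> = "Transposition.transpose (length u) (Suc (length u))"
  have \<tau>: "?\<tau> permutes {..<length ?w}"
    by (rule permutes_swap_id) auto
  have "u @ b # a # v = permute_list ?\<tau> ?w"
    by (rule nth_equalityI) (auto simp: permute_list_nth[OF \<tau>] nth_append nth_Cons' transpose_def)
  then show ?thesis using symw_permute_list[OF \<tau>] by simp
qed

text \<open>Symmetrization is linear in each letter: in every permuted word the letter at position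
  \<open>p\<close> sits between two words that do not depend on it.\<close>
lemma symw_list_update:
  assumes "p < length w"
  shows "symw (w[p := a]) = fsc (qinv (fact (length w)))
     (\<Sum>\<sigma>\<in>{\<sigma>. \<sigma> permutes {..<length w}}.
        sandwich (take (inv \<sigma> p) (permute_list \<sigma> w)) (wrd [a]) (drop (Suc (inv \<sigma> p)) (permute_list \<sigma> w)))"
  unfolding symw_eq_sum_permute_list length_list_update
proof (intro arg_cong[where f = "fsc _"] sum.cong refl)
  fix \<sigma> assume "\<sigma> \<in> {\<sigma>. \<sigma> permutes {..<length w}}"
  then have \<sigma>: "\<sigma> permutes {..<length w}" by simp
  have "inv \<sigma> p < length (permute_list \<sigma> w)"
    using permutes_in_image[OF permutes_inv[OF \<sigma>]] assms by simp
  then show "wrd (permute_list \<sigma> (w[p := a])) =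
      sandwich (take (inv \<sigma> p) (permute_list \<sigma> w)) (wrd [a]) (drop (Suc (inv \<sigma> p)) (permute_list \<sigma> w))"
    by (simp add: permute_list_list_update[OF \<sigma> assms] upd_conv_take_nth_drop sandwich_wrd)
qed

lemma symz_sandwich_letters_idl:
  assumes r: "fsupp r" "r \<in> idl R" and letters: "\<And>s. r s \<noteq> 0 \<Longrightarrow> length s = 1"
    and p: "p < length w"
  shows "symz (sandwich (take p w) r (drop (Suc p) w)) \<in> idl R"
proof -
  let ?S = "{s. r s \<noteq> 0}"
  let ?q = "qinv (fact (length w))"
  let ?P = "{\<sigma>. \<sigma> permutes {..<length w}}"
  define A where "A \<sigma> = take (inv \<sigma> p) (permute_list \<sigma> w)" for \<sigma>
  define B where "B \<sigma> = drop (Suc (inv \<sigma> p)) (permute_list \<sigma> w)" for \<sigma>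
  have single: "[hd s] = s" if "s \<in> ?S" for s
    using letters[of s] that by (cases s) auto
  have "(\<Sum>s\<in>?S. fsc (r s) (wrd [hd s])) = (\<Sum>s\<in>?S. fsc (r s) (wrd s))"
    by (rule sum.cong) (simp_all add: single)
  also have "\<dots> = r"
    by (rule fralg_expand[OF r(1), symmetric])
  finally have r_letters: "(\<Sum>s\<in>?S. fsc (r s) (wrd [hd s])) = r" .
  have word: "take p w @ s @ drop (Suc p) w = w[p := hd s]" if "s \<in> ?S" for s
    using single[OF that] p by (simp add: upd_conv_take_nth_drop)
  have "symz (sandwich (take p w) r (drop (Suc p) w))
      = (\<Sum>s\<in>?S. fsc (r s) (symw (take p w @ s @ drop (Suc p) w)))"
    by (simp add: sandwich_expand[OF r(1)] symz_sum symz_fsc)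
  also have "\<dots> = (\<Sum>s\<in>?S. fsc (r s) (symw (w[p := hd s])))"
    by (rule sum.cong) (simp_all add: word)
  also have "\<dots> = (\<Sum>s\<in>?S. \<Sum>\<sigma>\<in>?P.
      fsc ?q (sandwich (A \<sigma>) (fsc (r s) (wrd [hd s])) (B \<sigma>)))"
    by (simp add: symw_list_update[OF p] A_def B_def fsc_sum_right fsc_fsc sandwich_fsc mult.commute)
  also have "\<dots> = (\<Sum>\<sigma>\<in>?P. \<Sum>s\<in>?S.
      fsc ?q (sandwich (A \<sigma>) (fsc (r s) (wrd [hd s])) (B \<sigma>)))"
    by (rule sum.swap)
  also have "\<dots> = fsc ?q (\<Sum>\<sigma>\<in>?P. sandwich (A \<sigma>) (\<Sum>s\<in>?S. fsc (r s) (wrd [hd s])) (B \<sigma>))"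
    by (simp only: fsc_sum_right sandwich_sum)
  finally show ?thesis
    unfolding r_letters using r(2) by (simp only:) (intro idl.smul idl_sum sandwich_idl)
qed

lemma rel_lin_letters:
  assumes "r \<in> rel_lin scale"
  shows "fsupp r" "r s \<noteq> 0 \<Longrightarrow> length s = 1"
proof -
  from assms consider (add) x y where "r = wrd [x + y] - wrd [x] - wrd [y]"
    | (scale) c x where "r = wrd [scale c x] - fsc c (wrd [x])"
    unfolding rel_lin_def by blast
  note rel = this
  show "fsupp r"
    using rel by cases simp_all
  show "length s = 1" if "r s \<noteq> 0"
    using rel by cases (use that in \<open>auto simp: wrd_def fsc_def split: if_splits\<close>)
qed

lemma symz_sandwich_rel_S:
  fixes scale :: "'k::comm_ring_1 \<Rightarrow> 'g::ab_group_add \<Rightarrow> 'g"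
  assumes "r \<in> rel_S scale"
  shows "symz (sandwich u r v) \<in> idl (rel_U scale br)"
  using assms unfolding rel_S_def
proof
  assume lin: "r \<in> rel_lin scale"
  then have "r \<in> idl (rel_U scale br)"
    unfolding rel_U_def by (intro idl.gen UnI1)
  from symz_sandwich_letters_idl[OF rel_lin_letters(1)[OF lin] this rel_lin_letters(2)[OF lin],
      of "length u" "u @ 0 # v"]
  show ?thesis by simp
next
  assume "r \<in> {wrd [x, y] - wrd [y, x] | x y. True}"
  then obtain x y where r: "r = wrd [x, y] - wrd [y, x]" by blast
  have "symz (sandwich u r v) = symw (u @ x # y # v) - symw (u @ y # x # v)"
    by (simp add: r sandwich_diff sandwich_wrd symz_diff)
  also have "\<dots> = 0"
    by (simp only: symw_swap[of u y x v] diff_self)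
  finally show ?thesis by (simp add: idl.zero)
qed

text \<open>The induction over the ideal instantiates its predicate with eta-expanded terms, which the
  simplifier would unfold pointwise; hence every case is first proved in eta-contracted form.\<close>
lemma symz_sandwich_idl_rel_S:
  fixes scale :: "'k::comm_ring_1 \<Rightarrow> 'g::ab_group_add \<Rightarrow> 'g"
  assumes "a \<in> idl (rel_S scale)"
  shows "symz (sandwich u a v) \<in> idl (rel_U scale br)"
proof -
  have fsupp: "fsupp b" if "b \<in> idl (rel_S scale)" for b :: "('g,'k) fralg"
    using that by (rule fsupp_idl[rotated]) (auto simp: rel_S_def rel_lin_letters)
  let ?I = "idl (rel_U scale br)"
  from assms show ?thesis
  proof (induction a arbitrary: u v rule: idl.induct)
    case zero
    have "symz (sandwich u 0 v) \<in> ?I"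
      by (simp add: sandwich_def idl.zero)
    then show ?case .
  next
    case (gen r)
    then show ?case by (rule symz_sandwich_rel_S)
  next
    case (add a b)
    have "symz (sandwich u (a + b) v) = symz (sandwich u a v) + symz (sandwich u b v)"
      using add.hyps by (simp add: sandwich_add symz_add fsupp fsupp_sandwich)
    then have "symz (sandwich u (a + b) v) \<in> ?I"
      using add.IH by (simp add: idl.add)
    then show ?case .
  next
    case (smul a c)
    have "symz (sandwich u (fsc c a) v) = fsc c (symz (sandwich u a v))"
      using smul.hyps by (simp add: sandwich_fsc symz_fsc fsupp fsupp_sandwich)
    then have "symz (sandwich u (fsc c a) v) \<in> ?I"
      using smul.IH by (simp add: idl.smul)
    then show ?case .
  next
    case (lmul a u')
    have "symz (sandwich u (fmul (wrd u') a) v) \<in> ?I"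
      using lmul by (simp add: sandwich_fmul_left fsupp)
    then show ?case .
  next
    case (rmul a v')
    have "symz (sandwich u (fmul a (wrd v')) v) \<in> ?I"
      using rmul by (simp add: sandwich_fmul_right fsupp)
    then show ?case .
  qed
qed

lemma xi_Scl:
  fixes scale :: "'k::comm_ring_1 \<Rightarrow> 'g::ab_group_add \<Rightarrow> 'g"
  assumes "fsupp p0"
  shows "xi scale br (Scl scale p0) = Ucl scale br (symz p0)"
proof -
  define p where "p = (SOME p. p \<in> Scl scale p0)"
  have "p \<in> Scl scale p0"
    unfolding p_def Scl_def
    by (rule someI[where P = "\<lambda>p. p \<in> qclass (rel_S scale) p0"], rule qclass_self[OF assms])
  then have "fsupp p" and "p - p0 \<in> idl (rel_S scale)"
    unfolding Scl_def qclass_def by auto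
  then have "symz p - symz p0 \<in> idl (rel_U scale br)"
    using symz_sandwich_idl_rel_S[of "p - p0" scale "[]" "[]" br] assms
    by (simp add: sandwich_Nil symz_diff)
  then show ?thesis
    unfolding xi_def p_def[symmetric] unfolding Ucl_def by (rule qclass_eqI)
qed

lemma Lmul_Ucl:
  fixes scale :: "'k::comm_ring_1 \<Rightarrow> 'g::ab_group_add \<Rightarrow> 'g"
  assumes "fsupp q0"
  shows "Lmul scale br h (Ucl scale br q0) = Ucl scale br (fmul (wrd [h]) q0)"
proof -
  define p where "p = (SOME p. p \<in> Ucl scale br q0)"
  have "p \<in> Ucl scale br q0"
    unfolding p_def Ucl_def
    by (rule someI[where P = "\<lambda>p. p \<in> qclass (rel_U scale br) q0"], rule qclass_self[OF assms])
  then have "p - q0 \<in> idl (rel_U scale br)"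
    unfolding Ucl_def qclass_def by auto
  then have "fmul (wrd [h]) p - fmul (wrd [h]) q0 \<in> idl (rel_U scale br)"
    by (metis fmul_diff_right idl.lmul)
  then show ?thesis
    unfolding Lmul_def p_def[symmetric] unfolding Ucl_def by (rule qclass_eqI)
qed

section \<open>Symmetrizing powers\<close>

lemma symw_replicate:
  assumes "contains_rat TYPE('k::comm_ring_1)"
  shows "symw (replicate n x) = (wrd (replicate n x) :: ('g,'k) fralg)"
proof -
  have "(\<Sum>\<sigma>\<in>{\<sigma>. \<sigma> permutes {..<n}}. wrd (permute_list \<sigma> (replicate n x)))
      = (\<Sum>\<sigma>\<in>{\<sigma>. \<sigma> permutes {..<n}}. (wrd (replicate n x) :: ('g,'k) fralg))"
    by (rule sum.cong) (simp_all add: permute_list_replicate)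
  then show ?thesis
    using of_nat_mult_qinv[OF assms, of "fact n"]
    by (simp add: symw_eq_sum_permute_list sum_const_fralg card_permutations fsc_fsc mult.commute
        del: sum_constant)
qed

lemma replicate_list_update:
  assumes "i \<le> k"
  shows "(replicate (Suc k) x)[i := y] = replicate i x @ y # replicate (k - i) x"
proof -
  have "replicate (Suc k) x = replicate (i + Suc (k - i)) x"
    using assms by simp
  also have "\<dots> = replicate i x @ replicate (Suc (k - i)) x"
    by (rule replicate_add)
  finally have split: "replicate (Suc k) x = replicate i x @ replicate (Suc (k - i)) x" .
  show ?thesis
    unfolding split by (simp add: list_update_append)
qed

lemma symw_replicate_snoc:
  assumes "contains_rat TYPE('k::comm_ring_1)"
  shows "symw (replicate k x @ [y])
       = (\<Sum>i\<le>k. fsc (qinv (Suc k)) (wrd (replicate i x @ y # replicate (k - i) x)) :: ('g,'k) fralg)"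
proof -
  let ?P = "\<lambda>S. {\<sigma>. \<sigma> permutes S}"
  let ?W = "\<lambda>i. (wrd (replicate i x @ y # replicate (k - i) x) :: ('g,'k) fralg)"
  have snoc: "replicate k x @ [y] = (replicate (Suc k) x)[k := y]"
    using replicate_list_update[of k k x y] by simp
  have perm: "wrd (permute_list \<sigma> (replicate k x @ [y])) = ?W (inv \<sigma> k)"
    if "\<sigma> permutes {..<Suc k}" for \<sigma>
  proof -
    have "inv \<sigma> k \<le> k"
      using permutes_in_image[OF permutes_inv[OF that], of k] by simp
    have "permute_list \<sigma> (replicate k x @ [y]) = (replicate (Suc k) x)[inv \<sigma> k := y]"
      unfolding snoc
      using permute_list_list_update[of \<sigma> "replicate (Suc k) x" k y] permute_list_replicate[OF that, of x] that
      by (simp del: replicate_Suc)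
    then show ?thesis
      by (simp only: replicate_list_update[OF \<open>inv \<sigma> k \<le> k\<close>])
  qed
  have "(\<Sum>\<sigma>\<in>?P {..<Suc k}. wrd (permute_list \<sigma> (replicate k x @ [y])))
      = (\<Sum>\<sigma>\<in>?P {..<Suc k}. ?W (inv \<sigma> k))"
    by (rule sum.cong) (simp_all add: perm)
  also have "\<dots> = (\<Sum>\<sigma>\<in>?P {..<Suc k}. ?W (\<sigma> k))"
    by (subst sum_permutations_inverse) (rule sum.cong, simp_all add: permutes_inv_inv)
  also have "\<dots> = (\<Sum>b\<in>{..k}. \<Sum>\<sigma>\<in>?P {..<k}. ?W ((Transposition.transpose k b \<circ> \<sigma>) k))"
  proof -
    have "{..<Suc k} = insert k {..<k}" "{..k} = insert k {..<k}" by auto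
    then show ?thesis by (simp only:) (rule sum_over_permutations_insert; simp)
  qed
  also have "\<dots> = (\<Sum>b\<in>{..k}. fsc (of_nat (fact k)) (?W b))"
    by (rule sum.cong) (simp_all add: permutes_not_in sum_const_fralg card_permutations del: sum_constant)
  finally show ?thesis
    by (simp add: symw_eq_sum_permute_list fsc_sum_right fsc_fsc qinv_fact_Suc_mult_fact[OF assms]
        del: fact_Suc)
qed

section \<open>Reordering in U(g)\<close>

lemma pascal_sum:
  fixes t :: "nat \<Rightarrow> 'k::comm_ring_1"
  shows "(\<Sum>l\<le>i. of_nat (i choose l) * t l) + (\<Sum>l\<le>i. of_nat (i choose l) * t (Suc l))
       = (\<Sum>l\<le>Suc i. of_nat (Suc i choose l) * t l)"
proof -
  have "(\<Sum>l\<le>i. of_nat (i choose l) * t l) = (\<Sum>l\<le>Suc i. of_nat (i choose l) * t l)"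
    by (simp add: sum.atMost_Suc binomial_eq_0)
  also have "\<dots> = t 0 + (\<Sum>l\<le>i. of_nat (i choose Suc l) * t (Suc l))"
    by (subst sum.atMost_Suc_shift) simp
  finally show ?thesis
    by (subst sum.atMost_Suc_shift) (simp add: sum.distrib algebra_simps)
qed

text \<open>In U(g), \<open>x^i y = \<Sum>\<^sub>l C(i,l) (ad x)^l(y) x^(i-l)\<close>, from \<open>x z = z x + [x,z]\<close>.\<close>
lemma reorder_replicate_ad_pow:
  fixes scale :: "'k::comm_ring_1 \<Rightarrow> 'g::ab_group_add \<Rightarrow> 'g"
  shows "wrd (replicate i x @ (br x ^^ j) h # v) -
    (\<Sum>l\<le>i. fsc (of_nat (i choose l)) (wrd ((br x ^^ (j + l)) h # replicate (i - l) x @ v)))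
    \<in> idl (rel_U scale br)"
proof (induction i arbitrary: j v)
  case 0
  have "(wrd ((br x ^^ j) h # v) :: ('g,'k) fralg)
      - (\<Sum>l\<le>0. fsc (of_nat (0 choose l)) (wrd ((br x ^^ (j + l)) h # replicate (0 - l) x @ v))) = 0"
    by simp
  then show ?case by (simp only: replicate_0 append_Nil idl.zero)
next
  case (Suc i)
  let ?Y = "\<lambda>j. (br x ^^ j) h"
  let ?I = "idl (rel_U scale br)"
  define A :: "('g,'k) fralg" where "A = wrd (replicate (Suc i) x @ ?Y j # v)"
  define B :: "('g,'k) fralg" where "B = wrd (replicate i x @ ?Y j # x # v)"
  define C :: "('g,'k) fralg" where "C = wrd (replicate i x @ ?Y (Suc j) # v)"
  define S1 :: "('g,'k) fralg" where
    "S1 = (\<Sum>l\<le>i. fsc (of_nat (i choose l)) (wrd (?Y (j + l) # replicate (i - l) x @ x # v)))"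
  define S2 :: "('g,'k) fralg" where
    "S2 = (\<Sum>l\<le>i. fsc (of_nat (i choose l)) (wrd (?Y (Suc j + l) # replicate (i - l) x @ v)))"
  define T :: "('g,'k) fralg" where
    "T = (\<Sum>l\<le>Suc i. fsc (of_nat (Suc i choose l)) (wrd (?Y (j + l) # replicate (Suc i - l) x @ v)))"
  have "sandwich (replicate i x) (wrd [x, ?Y j] - wrd [?Y j, x] - wrd [br x (?Y j)]) v \<in> ?I"
    by (intro sandwich_idl idl.gen) (auto simp: rel_U_def)
  then have "A - B - C \<in> ?I"
    by (simp add: A_def B_def C_def sandwich_diff sandwich_wrd replicate_app_Cons_same)
  moreover have "B - S1 \<in> ?I"
    unfolding B_def S1_def by (rule Suc.IH)
  moreover have "C - S2 \<in> ?I"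
    unfolding C_def S2_def by (rule Suc.IH)
  ultimately have "(A - B - C) + (B - S1) + (C - S2) \<in> ?I"
    by (intro idl.add)
  moreover have "S1 + S2 = T"
  proof
    fix w
    define t where "t l = (wrd (?Y (j + l) # replicate (Suc i - l) x @ v) :: ('g,'k) fralg) w" for l
    have "S1 w = (\<Sum>l\<le>i. of_nat (i choose l) * t l)"
      unfolding S1_def sum_apply t_def fsc_def
      by (rule sum.cong) (simp_all add: Suc_diff_le replicate_app_Cons_same)
    moreover have "S2 w = (\<Sum>l\<le>i. of_nat (i choose l) * t (Suc l))"
      unfolding S2_def sum_apply t_def fsc_def by simp
    moreover have "T w = (\<Sum>l\<le>Suc i. of_nat (Suc i choose l) * t l)"
      unfolding T_def sum_apply t_def fsc_def by simp
    ultimately show "(S1 + S2) w = T w"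
      using pascal_sum[of i t] by simp
  qed
  moreover have "(A - B - C) + (B - S1) + (C - S2) = A - (S1 + S2)"
    by (simp add: algebra_simps)
  ultimately have "A - T \<in> ?I"
    by (simp only:)
  then show ?case
    unfolding A_def T_def .
qed

lemma hockey_stick_sum:
  fixes v :: "nat \<Rightarrow> 'k::comm_ring_1"
  shows "(\<Sum>i\<le>k. \<Sum>l\<le>i. of_nat (i choose l) * v l) = (\<Sum>l\<le>k. of_nat (Suc k choose Suc l) * v l)"
proof -
  have "(\<Sum>i\<le>k. \<Sum>l\<le>i. of_nat (i choose l) * v l) = (\<Sum>i\<le>k. \<Sum>l\<le>k. of_nat (i choose l) * v l)"
    by (rule sum.cong[OF refl], rule sum.mono_neutral_left) (auto simp: binomial_eq_0)
  also have "\<dots> = (\<Sum>l\<le>k. of_nat (\<Sum>i\<le>k. i choose l) * v l)"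
    by (subst sum.swap) (simp add: sum_distrib_right)
  finally show ?thesis by (simp only: sum_choose_upper)
qed

lemma symw_replicate_snoc_reorder:
  fixes scale :: "'k::comm_ring_1 \<Rightarrow> 'g::ab_group_add \<Rightarrow> 'g"
  assumes "contains_rat TYPE('k)"
  shows "symw (replicate k x @ [(br x ^^ j) h]) -
    (\<Sum>l\<le>k. fsc (qinv (Suc k) * of_nat (Suc k choose Suc l)) (wrd ((br x ^^ (j + l)) h # replicate (k - l) x)))
    \<in> idl (rel_U scale br)"
proof -
  let ?Y = "\<lambda>j. (br x ^^ j) h"
  let ?q = "qinv (Suc k) :: 'k"
  define A :: "nat \<Rightarrow> ('g,'k) fralg" where
    "A i = (\<Sum>l\<le>i. fsc (of_nat (i choose l)) (wrd (?Y (j + l) # replicate (i - l) x @ replicate (k - i) x)))" for i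
  have "(\<Sum>i\<le>k. fsc ?q (wrd (replicate i x @ ?Y j # replicate (k - i) x) - A i)) \<in> idl (rel_U scale br)"
    unfolding A_def by (intro idl_sum idl.smul reorder_replicate_ad_pow)
  moreover have "(\<Sum>i\<le>k. fsc ?q (A i))
      = (\<Sum>l\<le>k. fsc (?q * of_nat (Suc k choose Suc l)) (wrd (?Y (j + l) # replicate (k - l) x)))"
  proof
    fix w
    define v where "v l = (wrd (?Y (j + l) # replicate (k - l) x) :: ('g,'k) fralg) w" for l
    have "A i w = (\<Sum>l\<le>i. of_nat (i choose l) * v l)" if "i \<le> k" for i
      unfolding A_def sum_apply fsc_def v_def
      by (rule sum.cong) (use that in \<open>simp_all add: replicate_add[symmetric]\<close>)
    then have "(\<Sum>i\<le>k. fsc ?q (A i)) w = ?q * (\<Sum>i\<le>k. \<Sum>l\<le>i. of_nat (i choose l) * v l)"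
      by (simp add: sum_apply fsc_def sum_distrib_left)
    then show "(\<Sum>i\<le>k. fsc ?q (A i)) w
        = (\<Sum>l\<le>k. fsc (?q * of_nat (Suc k choose Suc l)) (wrd (?Y (j + l) # replicate (k - l) x))) w"
      by (simp add: hockey_stick_sum sum_apply fsc_def v_def sum_distrib_left mult.assoc)
  qed
  ultimately show ?thesis
    by (simp add: symw_replicate_snoc[OF assms] fsc_diff_right sum_subtractf)
qed

section \<open>Collecting the Bernoulli coefficients\<close>

lemma bernoulli_coefficient_sum:
  fixes v :: "nat \<Rightarrow> 'k::comm_ring_1"
  assumes "contains_rat TYPE('k)"
  shows "(\<Sum>k\<le>n. (of_nat (n choose k) * ratk (bernoulli_num (n - k))) *
            (\<Sum>l\<le>k. (qinv (Suc k) * of_nat (Suc k choose Suc l)) * v (n - k + l))) = v 0"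
proof -
  define d :: "nat \<Rightarrow> nat \<Rightarrow> 'k" where
    "d k l = (of_nat (n choose k) * ratk (bernoulli_num (n - k))) * (qinv (Suc k) * of_nat (Suc k choose Suc l))"
    for k l
  have d_ratk: "d (n - a) l = ratk (of_nat (n choose a) * bernoulli_num a * (1 / of_nat (Suc (n - a)))
      * of_nat (Suc (n - a) choose Suc l))" if "a \<le> n" for a l
    unfolding d_def ratk_mult[OF assms] ratk_of_nat[OF assms] ratk_inverse_of_nat[OF assms zero_less_Suc]
    using that by (simp add: binomial_symmetric[OF that, symmetric] ac_simps)
  have "(\<Sum>k\<le>n. (of_nat (n choose k) * ratk (bernoulli_num (n - k))) *
            (\<Sum>l\<le>k. (qinv (Suc k) * of_nat (Suc k choose Suc l)) * v (n - k + l)))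
      = (\<Sum>k\<le>n. \<Sum>l\<le>k. d k l * v (n - k + l))"
    by (simp add: d_def sum_distrib_left mult.assoc)
  also have "\<dots> = (\<Sum>a\<le>n. \<Sum>l\<le>n - a. d (n - a) l * v (a + l))"
    by (rule sum.reindex_bij_witness[where i = "\<lambda>a. n - a" and j = "\<lambda>a. n - a"]) auto
  also have "\<dots> = (\<Sum>(a, l)\<in>{(a, l). a + l \<le> n}. d (n - a) l * v (a + l))"
  proof -
    have "Sigma {..n} (\<lambda>a. {..n - a}) = {(a, l). a + l \<le> n}" by auto
    then show ?thesis by (simp add: sum.Sigma)
  qed
  also have "\<dots> = (\<Sum>m\<le>n. \<Sum>a\<le>m. d (n - a) (m - a) * v m)"
    by (subst sum.triangle_reindex_eq) simp
  also have "\<dots> = (\<Sum>m\<le>n. if m = 0 then v m else 0)"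
  proof (rule sum.cong[OF refl])
    fix m assume "m \<in> {..n}"
    then have "(\<Sum>a\<le>m. d (n - a) (m - a)) = ratk (\<Sum>a\<le>m. of_nat (n choose a) * bernoulli_num a
        * (1 / of_nat (Suc (n - a))) * of_nat (Suc (n - a) choose Suc (m - a)))"
      by (simp add: d_ratk ratk_sum[OF assms])
    also have "\<dots> = ratk (if m = 0 then 1 else 0)"
      using \<open>m \<in> {..n}\<close> by (simp only: bernoulli_num_binomial_sum atMost_iff)
    also have "\<dots> = (if m = 0 then 1 else 0)"
      using ratk_of_nat[OF assms, of 0] ratk_of_nat[OF assms, of 1] by simp
    finally show "(\<Sum>a\<le>m. d (n - a) (m - a) * v m) = (if m = 0 then v m else 0)"
      by (simp add: sum_distrib_right[symmetric])
  qed
  also have "\<dots> = v 0" by (simp add: sum.delta)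
  finally show ?thesis .
qed

lemma symz_bernoulli_sum_congruent:
  fixes scale :: "'k::comm_ring_1 \<Rightarrow> 'g::ab_group_add \<Rightarrow> 'g"
  assumes "contains_rat TYPE('k)"
  shows "symz (\<Sum>k\<le>n. fsc (of_nat (n choose k) * ratk (bernoulli_num (n - k)))
                           (wrd (replicate k x @ [(br x ^^ (n - k)) h])))
      - wrd (h # replicate n x) \<in> idl (rel_U scale br)"
proof -
  let ?Y = "\<lambda>j. (br x ^^ j) h"
  define c :: "nat \<Rightarrow> 'k" where "c k = of_nat (n choose k) * ratk (bernoulli_num (n - k))" for k
  define B :: "nat \<Rightarrow> ('g,'k) fralg" where
    "B k = (\<Sum>l\<le>k. fsc (qinv (Suc k) * of_nat (Suc k choose Suc l)) (wrd (?Y (n - k + l) # replicate (k - l) x)))" for k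
  have "(\<Sum>k\<le>n. fsc (c k) (symw (replicate k x @ [?Y (n - k)]) - B k)) \<in> idl (rel_U scale br)"
    unfolding B_def by (intro idl_sum idl.smul symw_replicate_snoc_reorder[OF assms])
  moreover have "(\<Sum>k\<le>n. fsc (c k) (B k)) = wrd (h # replicate n x)"
  proof
    fix w
    define v where "v m = (wrd (?Y m # replicate (n - m) x) :: ('g,'k) fralg) w" for m
    have "B k w = (\<Sum>l\<le>k. (qinv (Suc k) * of_nat (Suc k choose Suc l)) * v (n - k + l))" if "k \<le> n" for k
      unfolding B_def sum_apply fsc_def v_def by (rule sum.cong) (use that in auto)
    then have "(\<Sum>k\<le>n. fsc (c k) (B k)) w
        = (\<Sum>k\<le>n. c k * (\<Sum>l\<le>k. (qinv (Suc k) * of_nat (Suc k choose Suc l)) * v (n - k + l)))"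
      by (simp add: sum_apply fsc_def)
    also have "\<dots> = v 0"
      unfolding c_def by (rule bernoulli_coefficient_sum[OF assms])
    finally show "(\<Sum>k\<le>n. fsc (c k) (B k)) w = wrd (h # replicate n x) w"
      by (simp add: v_def)
  qed
  ultimately show ?thesis
    by (simp add: c_def symz_sum symz_fsc fsc_diff_right sum_subtractf)
qed

theorem mainTheorem12:
  fixes scale :: "'k::comm_ring_1 \<Rightarrow> 'g::ab_group_add \<Rightarrow> 'g"
    and br :: "'g \<Rightarrow> 'g \<Rightarrow> 'g"
    and h x :: 'g and n :: nat
  assumes "contains_rat TYPE('k)"
    and "lie_algebra scale br"
    and PBW: "bij_betw (xi scale br) (Scarrier scale) (Ucarrier scale br)"
  shows "Dop scale br h (Scl scale (wrd (replicate n x)))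
           = xi_inv scale br (Ucl scale br (wrd (h # replicate n x)))
       \<and> xi_inv scale br (Ucl scale br (wrd (h # replicate n x)))
           = Scl scale (\<Sum>k\<le>n. fsc (of_nat (n choose k) * ratk (bernoulli_num (n - k)))
                                   (wrd (replicate k x @ [(br x ^^ (n - k)) h])))"
proof
  have "xi scale br (Scl scale (wrd (replicate n x))) = Ucl scale br (wrd (replicate n x))"
    by (simp add: xi_Scl symw_replicate[OF assms(1)])
  then show "Dop scale br h (Scl scale (wrd (replicate n x))) = xi_inv scale br (Ucl scale br (wrd (h # replicate n x)))"
    by (simp add: Dop_def Lmul_Ucl fmul_wrd_wrd)
next
  define R :: "('g,'k) fralg" where
    "R = (\<Sum>k\<le>n. fsc (of_nat (n choose k) * ratk (bernoulli_num (n - k))) (wrd (replicate k x @ [(br x ^^ (n - k)) h])))"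
  have R: "fsupp R" unfolding R_def by (intro fsupp_sum fsupp_fsc fsupp_wrd)
  have "xi scale br (Scl scale R) = Ucl scale br (symz R)"
    by (rule xi_Scl[OF R])
  also have "\<dots> = Ucl scale br (wrd (h # replicate n x))"
    unfolding Ucl_def R_def by (rule qclass_eqI[OF symz_bernoulli_sum_congruent[OF assms(1)]])
  finally have "xi scale br (Scl scale R) = Ucl scale br (wrd (h # replicate n x))" .
  moreover have "Scl scale R \<in> Scarrier scale"
    unfolding Scl_def Scarrier_def qcarrier_def using R by blast
  ultimately show "xi_inv scale br (Ucl scale br (wrd (h # replicate n x))) = Scl scale R"
    using PBW unfolding xi_inv_def bij_betw_def by (metis the_inv_into_f_f)
qed

end
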